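(* Let $u,v\in\mathbb{N}$. Let $M$ be a finite $u\times v$ matrix which is image partition regular over $\mathbb{N}$, and let $N$ be an infinite ($\omega\times\omega$) matrix which is image partition regular near $0$ over a dense subsemigroup $S$ of $((0,\infty),+)$. Then the block matrix \[\begin{pmatrix} M & O\\ O & N\end{pmatrix}\] (where the $O$ denote zero matrices of the appropriate sizes) is image partition regular near $0$ over $S$.
   Context: Matrices have rational entries, and each row of an infinite matrix has only finitely many nonzero entries (so that $A\vec{x}$ is defined). A $u\times v$ matrix $A$ with $u,v\in\mathbb{N}$ is image partition regular over $\mathbb{N}$ if whenever $\mathbb{N}$ is partitioned into finitely many cells $\mathbb{N}=\bigcup_{i=1}^r C_i$, there exist $i$ and $\vec{x}\in\mathbb{N}^v$ such that all entries of $A\vec{x}$ lie in $C_i$. For $S$ a dense subsemigroup of $((0,\infty),+)$ and $A$ a $u\times v$ matrix with $u,v\in\mathbb{N}\cup\{\omega\}$, $A$ is image partition regular near $0$ over $S$ if whenever $S=\bigcup_{i=1}^r C_i$ is a finite partition and $\delta>0$, there exist $i\in\{1,\dots,r\}$ and $\vec{x}\in S^v$ such that all entries of $A\vec{x}$ lie in $C_i\cap(0,\delta)$. *)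

theory Defs
  imports Complex_Main
begin

text \<open>Matrices are functions nat => nat => rat. A finite u x v matrix uses only
indices i < u, j < v; an omega x omega matrix uses all indices and must be
row-finite.\<close>

definition row_finite :: "(nat \<Rightarrow> nat \<Rightarrow> rat) \<Rightarrow> bool" where
  "row_finite A \<longleftrightarrow> (\<forall>k. finite {j. A k j \<noteq> 0})"

definition omega_apply :: "(nat \<Rightarrow> nat \<Rightarrow> rat) \<Rightarrow> (nat \<Rightarrow> real) \<Rightarrow> nat \<Rightarrow> real" where
  "omega_apply A x k = (\<Sum>j\<in>{j. A k j \<noteq> 0}. real_of_rat (A k j) * x j)"

definition is_finite_partition :: "'a set \<Rightarrow> nat \<Rightarrow> (nat \<Rightarrow> 'a set) \<Rightarrow> bool" where
  "is_finite_partition X r C \<longleftrightarrow>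
     (\<Union>i<r. C i) = X \<and> (\<forall>i<r. \<forall>i'<r. i \<noteq> i' \<longrightarrow> C i \<inter> C i' = {})"

definition IPR_nat :: "nat \<Rightarrow> nat \<Rightarrow> (nat \<Rightarrow> nat \<Rightarrow> rat) \<Rightarrow> bool" where
  "IPR_nat u v M \<longleftrightarrow>
     (\<forall>r C. is_finite_partition {n::nat. 1 \<le> n} r C \<longrightarrow>
        (\<exists>i<r. \<exists>x :: nat \<Rightarrow> nat. (\<forall>j<v. 1 \<le> x j) \<and>
            (\<forall>k<u. (\<Sum>j<v. M k j * of_nat (x j)) \<in> of_nat ` C i)))"

definition dense_subsemigroup :: "real set \<Rightarrow> bool" where
  "dense_subsemigroup S \<longleftrightarrow>
     S \<subseteq> {0<..} \<and> (\<forall>x\<in>S. \<forall>y\<in>S. x + y \<in> S) \<and>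
     (\<forall>a b. 0 \<le> a \<and> a < b \<longrightarrow> (\<exists>s\<in>S. a < s \<and> s < b))"

definition IPR_near0_omega :: "real set \<Rightarrow> (nat \<Rightarrow> nat \<Rightarrow> rat) \<Rightarrow> bool" where
  "IPR_near0_omega S A \<longleftrightarrow>
     (\<forall>r C \<delta>. is_finite_partition S r C \<and> \<delta> > 0 \<longrightarrow>
        (\<exists>i<r. \<exists>x :: nat \<Rightarrow> real. (\<forall>j. x j \<in> S) \<and>
            (\<forall>k. omega_apply A x k \<in> C i \<inter> {0<..<\<delta>})))"

text \<open>The block matrix (M O; O N) as an omega x omega matrix: rows 0..u-1 and
columns 0..v-1 carry M, row u+k and column v+l carry N k l.\<close>
definition block_diag :: "nat \<Rightarrow> nat \<Rightarrow> (nat \<Rightarrow> nat \<Rightarrow> rat) \<Rightarrow> (nat \<Rightarrow> nat \<Rightarrow> rat)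
    \<Rightarrow> nat \<Rightarrow> nat \<Rightarrow> rat" where
  "block_diag u v M N k j =
     (if k < u then (if j < v then M k j else 0)
      else (if j < v then 0 else N (k - u) (j - v)))"

end

theory Submission
  imports Defs "HOL-Library.FuncSet"
begin

text \<open>
  By compactness, image partition regularity of \<open>M\<close> is uniform: for \<open>r\<close> colours there is an
  \<open>m\<close> such that every \<open>r\<close>-colouring of \<open>{1..m}\<close> admits a monochromatic image of \<open>M\<close>.
  Given a colouring of \<open>S\<close>, colour each \<open>y \<in> S\<close> by the pattern of colours of
  \<open>y, 2y, \<dots>, m y\<close>; these are finitely many colours, so \<open>N\<close> has a small image \<open>N z\<close> all of
  whose entries \<open>y\<^sub>k\<close> share one pattern. Colour \<open>{1..m}\<close> by \<open>n \<mapsto> colour of n y\<^sub>0\<close> and take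
  a monochromatic image \<open>M x\<close> of colour \<open>i\<close>, with some entry \<open>n\<^sub>0\<close>. Then
  \<open>(y\<^sub>0 x, n\<^sub>0 z)\<close> works: the upper rows are \<open>(M x)\<^sub>k y\<^sub>0\<close>, the lower rows \<open>n\<^sub>0 y\<^sub>k\<close>, and
  all of them have colour \<open>i\<close> because every \<open>y\<^sub>k\<close> has the pattern of \<open>y\<^sub>0\<close>.
\<close>

definition image_in :: "nat \<Rightarrow> nat \<Rightarrow> (nat \<Rightarrow> nat \<Rightarrow> rat) \<Rightarrow> nat set \<Rightarrow> bool" where
  "image_in u v M A \<longleftrightarrow>
     (\<exists>x::nat \<Rightarrow> nat. (\<forall>j<v. 1 \<le> x j) \<and> (\<forall>k<u. (\<Sum>j<v. M k j * of_nat (x j)) \<in> of_nat ` A))"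

lemma image_in_mono: "image_in u v M A \<Longrightarrow> A \<subseteq> B \<Longrightarrow> image_in u v M B"
  unfolding image_in_def by (meson image_mono subsetD)

lemma image_in_bounded:
  assumes "image_in u v M A"
  shows "\<exists>m. image_in u v M (A \<inter> {..m})"
proof -
  obtain x where x: "\<forall>j<v. 1 \<le> x j" and entries: "\<forall>k<u. (\<Sum>j<v. M k j * of_nat (x j)) \<in> of_nat ` A"
    using assms unfolding image_in_def by auto
  then have "\<forall>k\<in>{..<u}. \<exists>n. n \<in> A \<and> (\<Sum>j<v. M k j * of_nat (x j)) = of_nat n"
    by (auto simp: image_iff)
  from bchoice[OF this] obtain e
    where "\<forall>k\<in>{..<u}. e k \<in> A \<and> (\<Sum>j<v. M k j * of_nat (x j)) = of_nat (e k)"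
    by blast
  then have e: "\<And>k. k < u \<Longrightarrow> e k \<in> A \<and> (\<Sum>j<v. M k j * of_nat (x j)) = of_nat (e k)"
    by simp
  have "(\<Sum>j<v. M k j * of_nat (x j)) \<in> of_nat ` (A \<inter> {..\<Sum>k<u. e k})" if "k < u" for k
  proof -
    have "e k \<le> (\<Sum>k<u. e k)"
      using that by (intro member_le_sum) auto
    then have "e k \<in> A \<inter> {..\<Sum>k<u. e k}"
      using e[OF that] by simp
    then show ?thesis
      using e[OF that] by (intro image_eqI[of _ of_nat "e k"]) auto
  qed
  then show ?thesis
    unfolding image_in_def using x by (intro exI[of _ "\<Sum>k<u. e k"] exI[of _ x]) auto
qed

lemma limit_of_nested_colourings:
  fixes B :: "nat \<Rightarrow> (nat \<Rightarrow> nat) set" and r :: nat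
  assumes nonempty: "\<And>m. B m \<noteq> {}"
    and nested: "\<And>m m'. m \<le> m' \<Longrightarrow> B m' \<subseteq> B m"
    and bounded: "\<And>m. B m \<subseteq> {f. \<forall>n. f n < r}"
  shows "\<exists>h. (\<forall>n. h n < r) \<and> (\<forall>m n. \<exists>f\<in>B m. \<forall>q<n. f q = h q)"
proof -
  define extendable where "extendable n g \<longleftrightarrow> (\<forall>m. \<exists>f\<in>B m. \<forall>q<n. f q = g q)" for n g
  have step: "\<exists>c<r. extendable (Suc n) (g(n := c))" if g: "extendable n g" for n g
  proof (rule ccontr)
    assume "\<not> ?thesis"
    then have "\<forall>c. \<exists>m. c < r \<longrightarrow> (\<forall>f\<in>B m. \<not> (\<forall>q<Suc n. f q = (g(n := c)) q))"
      by (auto simp: extendable_def)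
    from choice[OF this] obtain m
      where "\<forall>c. c < r \<longrightarrow> (\<forall>f\<in>B (m c). \<not> (\<forall>q<Suc n. f q = (g(n := c)) q))"
      by blast
    then have m: "\<And>c. c < r \<Longrightarrow> \<forall>f\<in>B (m c). \<not> (\<forall>q<Suc n. f q = (g(n := c)) q)"
      by blast
    \<comment> \<open>A level beyond the failure levels of all \<open>r\<close> extensions refutes each of them.\<close>
    obtain f where f: "f \<in> B (Max (m ` {..<r}))" "\<forall>q<n. f q = g q"
      using g unfolding extendable_def by blast
    have "f n < r"
      using f(1) bounded by blast
    then have "f \<in> B (m (f n))"
      using f(1) nested[of "m (f n)" "Max (m ` {..<r})"] by auto
    moreover have "\<forall>q<Suc n. f q = (g(n := f n)) q"
      using f(2) by (auto simp: less_Suc_eq)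
    ultimately show False
      using m[OF \<open>f n < r\<close>] by blast
  qed
  have "\<exists>F. \<forall>n. extendable n (F n) \<and> (\<exists>c<r. F (Suc n) = (F n)(n := c))"
  proof (rule dependent_nat_choice)
    show "\<exists>g. extendable 0 g"
      using nonempty unfolding extendable_def by blast
    show "\<exists>g'. extendable (Suc n) g' \<and> (\<exists>c<r. g' = g(n := c))" if "extendable n g" for g n
      using step[OF that] by blast
  qed
  then obtain F where F: "\<And>n. extendable n (F n)" "\<And>n. \<exists>c<r. F (Suc n) = (F n)(n := c)"
    by blast
  have F_stable: "F n q = F (Suc q) q" if "q < n" for n q
    using that
  proof (induction n)
    case (Suc n)
    then show ?case
      using F(2)[of n] by (cases "q = n") (auto simp: less_Suc_eq)
  qed simp
  show ?thesis
  proof (intro exI conjI allI)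
    show "F (Suc n) n < r" for n
      using F(2)[of n] by auto
    fix m n
    obtain f where f: "f \<in> B m" "\<forall>q<n. f q = F n q"
      using F(1)[of n] unfolding extendable_def by blast
    have "f q = F (Suc q) q" if "q < n" for q
      using f(2) F_stable[OF that] that by simp
    then show "\<exists>f\<in>B m. \<forall>q<n. f q = F (Suc q) q"
      using f(1) by blast
  qed
qed

lemma uniform_bound_for_colourings:
  fixes G :: "nat \<Rightarrow> (nat \<Rightarrow> nat) \<Rightarrow> bool" and r :: nat
  assumes local: "\<And>m f g. G m f \<Longrightarrow> (\<forall>q\<le>m. g q = f q) \<Longrightarrow> G m g"
    and mono: "\<And>m m' f. G m f \<Longrightarrow> m \<le> m' \<Longrightarrow> G m' f"
    and eventually_good: "\<And>f. \<forall>n. f n < r \<Longrightarrow> \<exists>m. G m f"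
  shows "\<exists>m. \<forall>f. (\<forall>n. f n < r) \<longrightarrow> G m f"
proof (rule ccontr)
  define bad where "bad m = {f. (\<forall>n. f n < r) \<and> \<not> G m f}" for m
  assume "\<not> ?thesis"
  then have "bad m \<noteq> {}" for m
    unfolding bad_def by blast
  moreover have "bad m' \<subseteq> bad m" if "m \<le> m'" for m m'
    unfolding bad_def using mono[OF _ that] by blast
  moreover have "bad m \<subseteq> {f. \<forall>n. f n < r}" for m
    unfolding bad_def by blast
  ultimately obtain h where h: "\<forall>n. h n < r" and near: "\<And>m n. \<exists>f\<in>bad m. \<forall>q<n. f q = h q"
    using limit_of_nested_colourings[of bad r] by blast
  obtain m where "G m h"
    using eventually_good h by blast
  moreover obtain f where "f \<in> bad m" "\<forall>q<Suc m. f q = h q"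
    using near by blast
  ultimately show False
    using local[of m h f] unfolding bad_def by (auto simp: less_Suc_eq_le)
qed

lemma IPR_nat_uniform_bound:
  fixes r :: nat
  assumes "IPR_nat u v M"
  shows "\<exists>m. \<forall>f. (\<forall>n. f n < r) \<longrightarrow> (\<exists>i<r. image_in u v M {n \<in> {1..m}. f n = i})"
proof (rule uniform_bound_for_colourings[where G = "\<lambda>m f. \<exists>i<r. image_in u v M {n \<in> {1..m}. f n = i}"])
  fix m f g
  assume "\<exists>i<r. image_in u v M {n \<in> {1..m}. f n = i}" and "\<forall>q\<le>m. g q = f q"
  moreover have "{n \<in> {1..m}. f n = i} = {n \<in> {1..m}. g n = i}" for i
    using \<open>\<forall>q\<le>m. g q = f q\<close> by auto
  ultimately show "\<exists>i<r. image_in u v M {n \<in> {1..m}. g n = i}"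
    by simp
next
  fix m m' f
  assume "\<exists>i<r. image_in u v M {n \<in> {1..m}. f n = i}" and "m \<le> m'"
  then obtain i where "i < r" "image_in u v M {n \<in> {1..m}. f n = i}"
    by blast
  moreover have "{n \<in> {1..m}. f n = i} \<subseteq> {n \<in> {1..m'}. f n = i}"
    using \<open>m \<le> m'\<close> by auto
  ultimately show "\<exists>i<r. image_in u v M {n \<in> {1..m'}. f n = i}"
    using image_in_mono by blast
next
  fix f :: "nat \<Rightarrow> nat"
  assume "\<forall>n. f n < r"
  then have "is_finite_partition {n. 1 \<le> n} r (\<lambda>i. {n. 1 \<le> n \<and> f n = i})"
    unfolding is_finite_partition_def by auto
  then obtain i where "i < r" "image_in u v M {n. 1 \<le> n \<and> f n = i}"
    using assms unfolding IPR_nat_def image_in_def by blast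
  then obtain m where "image_in u v M ({n. 1 \<le> n \<and> f n = i} \<inter> {..m})"
    using image_in_bounded by blast
  moreover have "{n. 1 \<le> n \<and> f n = i} \<inter> {..m} = {n \<in> {1..m}. f n = i}"
    by auto
  ultimately show "\<exists>m i. i < r \<and> image_in u v M {n \<in> {1..m}. f n = i}"
    using \<open>i < r\<close> by auto
qed

lemma of_nat_mult_mem_add_closed:
  fixes S :: "'a::semiring_1 set"
  assumes add: "\<And>a b. a \<in> S \<Longrightarrow> b \<in> S \<Longrightarrow> a + b \<in> S" and "y \<in> S" "1 \<le> n"
  shows "of_nat n * y \<in> S"
  using \<open>1 \<le> n\<close>
proof (induction n rule: nat_induct_at_least)
  case (Suc n)
  have "of_nat (Suc n) * y = of_nat n * y + y"
    by (simp add: algebra_simps)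
  then show ?case
    using add[OF Suc.IH \<open>y \<in> S\<close>] by simp
qed (simp add: \<open>y \<in> S\<close>)

lemma finite_partition_index:
  assumes "is_finite_partition X r C"
  obtains c where "\<And>y. y \<in> X \<Longrightarrow> c y < r \<and> y \<in> C (c y)"
proof -
  have "\<forall>y\<in>X. \<exists>i<r. y \<in> C i"
    using assms unfolding is_finite_partition_def by blast
  then obtain c where "\<forall>y\<in>X. c y < r \<and> y \<in> C (c y)"
    by (rule bchoice[THEN exE]) blast
  then show ?thesis
    using that by blast
qed

lemma finite_partition_into_fibres:
  assumes "finite (P ` X)"
  obtains q D where "is_finite_partition X q D"
    and "\<And>j y z. j < q \<Longrightarrow> y \<in> D j \<Longrightarrow> z \<in> D j \<Longrightarrow> P y = P z"
proof -
  obtain e where e: "bij_betw e {..<card (P ` X)} (P ` X)"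
    using ex_bij_betw_nat_finite[OF assms] lessThan_atLeast0 by metis
  define D where "D j = {y \<in> X. P y = e j}" for j
  have "X \<subseteq> (\<Union>j<card (P ` X). D j)"
  proof
    fix y
    assume "y \<in> X"
    then have "P y \<in> e ` {..<card (P ` X)}"
      using bij_betw_imp_surj_on[OF e] by simp
    then show "y \<in> (\<Union>j<card (P ` X). D j)"
      using \<open>y \<in> X\<close> unfolding D_def by auto
  qed
  then have "(\<Union>j<card (P ` X). D j) = X"
    unfolding D_def by auto
  moreover have "D i \<inter> D j = {}" if "i < card (P ` X)" "j < card (P ` X)" "i \<noteq> j" for i j
    using bij_betw_imp_inj_on[OF e] that unfolding D_def inj_on_def by auto
  ultimately have "is_finite_partition X (card (P ` X)) D"
    unfolding is_finite_partition_def by blast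
  then show ?thesis
    by (rule that) (simp add: D_def)
qed

lemma IPR_near0_omega_finite_valued:
  assumes "IPR_near0_omega S N" "finite (P ` S)" "\<delta> > 0"
  obtains x where "\<And>j. x j \<in> S" "\<And>k. omega_apply N x k \<in> S \<inter> {0<..<\<delta>}"
    "\<And>k. P (omega_apply N x k) = P (omega_apply N x 0)"
proof -
  obtain q D where part: "is_finite_partition S q D"
    and fibre: "\<And>j y z. j < q \<Longrightarrow> y \<in> D j \<Longrightarrow> z \<in> D j \<Longrightarrow> P y = P z"
    using finite_partition_into_fibres[OF assms(2)] by blast
  obtain j x where j: "j < q" and xS: "\<forall>j. x j \<in> S"
    and image: "\<forall>k. omega_apply N x k \<in> D j \<inter> {0<..<\<delta>}"
    using assms(1)[unfolded IPR_near0_omega_def, rule_format, OF conjI[OF part assms(3)]] by blast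
  have "D j \<subseteq> S"
    using part j unfolding is_finite_partition_def by blast
  then show ?thesis
    using that[of x] xS image fibre[OF j] by blast
qed

lemma IPR_near0_omega_synchronized_multiples:
  fixes c :: "real \<Rightarrow> nat"
  assumes "IPR_near0_omega S N" and add: "\<And>a b. a \<in> S \<Longrightarrow> b \<in> S \<Longrightarrow> a + b \<in> S"
    and c: "\<And>y. y \<in> S \<Longrightarrow> c y < r" and "\<delta> > 0"
  obtains x where "\<And>j. x j \<in> S" "\<And>k. omega_apply N x k \<in> S"
    "\<And>k n. n \<in> {1..m} \<Longrightarrow> of_nat n * omega_apply N x k \<in> S \<inter> {0<..<\<delta>}"
    "\<And>k n. n \<in> {1..m} \<Longrightarrow> c (of_nat n * omega_apply N x k) = c (of_nat n * omega_apply N x 0)"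
proof -
  define P where "P y = restrict (\<lambda>n. c (of_nat n * y)) {1..m}" for y
  have "P ` S \<subseteq> (\<Pi>\<^sub>E n\<in>{1..m}. {..<r})"
    using c of_nat_mult_mem_add_closed[OF add] unfolding P_def by auto
  then have "finite (P ` S)"
    by (rule finite_subset) (simp add: finite_PiE)
  moreover have "\<delta> / (real m + 1) > 0"
    using \<open>\<delta> > 0\<close> by simp
  ultimately obtain x where xS: "\<And>j. x j \<in> S"
    and small: "\<And>k. omega_apply N x k \<in> S \<inter> {0<..<\<delta> / (real m + 1)}"
    and same: "\<And>k. P (omega_apply N x k) = P (omega_apply N x 0)"
    using IPR_near0_omega_finite_valued[OF assms(1)] by blast
  have "of_nat n * omega_apply N x k \<in> S \<inter> {0<..<\<delta>}" if "n \<in> {1..m}" for n k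
  proof -
    have "real n * omega_apply N x k < (real m + 1) * (\<delta> / (real m + 1))"
      using small[of k] that by (intro mult_strict_mono) auto
    then show ?thesis
      using small[of k] that of_nat_mult_mem_add_closed[OF add] by auto
  qed
  moreover have "c (of_nat n * omega_apply N x k) = c (of_nat n * omega_apply N x 0)" if "n \<in> {1..m}" for n k
    using fun_cong[OF same[of k], of n] that unfolding P_def by simp
  ultimately show ?thesis
    using that xS small by blast
qed

lemma omega_apply_block_diag_upper:
  assumes "k < u"
  shows "omega_apply (block_diag u v M N) X k = (\<Sum>j<v. real_of_rat (M k j) * X j)"
proof -
  have support: "{j. block_diag u v M N k j \<noteq> 0} = {j. j < v \<and> M k j \<noteq> 0}"
    using assms unfolding block_diag_def by auto
  have "(\<Sum>j\<in>{j. j < v \<and> M k j \<noteq> 0}. real_of_rat (block_diag u v M N k j) * X j)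
      = (\<Sum>j<v. real_of_rat (block_diag u v M N k j) * X j)"
    by (intro sum.mono_neutral_left) (auto simp: block_diag_def assms)
  also have "\<dots> = (\<Sum>j<v. real_of_rat (M k j) * X j)"
    by (intro sum.cong) (auto simp: block_diag_def assms)
  finally show ?thesis
    unfolding omega_apply_def support .
qed

lemma omega_apply_block_diag_lower:
  assumes "u \<le> k"
  shows "omega_apply (block_diag u v M N) X k = omega_apply N (\<lambda>j. X (j + v)) (k - u)"
proof -
  have support: "{j. block_diag u v M N k j \<noteq> 0} = (\<lambda>j. j + v) ` {j. N (k - u) j \<noteq> 0}"
  proof (intro set_eqI iffI)
    fix j
    assume "j \<in> {j. block_diag u v M N k j \<noteq> 0}"
    then have "v \<le> j" "N (k - u) (j - v) \<noteq> 0"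
      using assms unfolding block_diag_def by (auto split: if_splits)
    then show "j \<in> (\<lambda>j. j + v) ` {j. N (k - u) j \<noteq> 0}"
      by (intro image_eqI[of _ _ "j - v"]) auto
  qed (use assms in \<open>auto simp: block_diag_def\<close>)
  have "omega_apply (block_diag u v M N) X k
      = (\<Sum>j\<in>{j. N (k - u) j \<noteq> 0}. real_of_rat (block_diag u v M N k (j + v)) * X (j + v))"
    unfolding omega_apply_def support by (subst sum.reindex) (auto simp: inj_on_def)
  also have "\<dots> = omega_apply N (\<lambda>j. X (j + v)) (k - u)"
    unfolding omega_apply_def using assms by (intro sum.cong) (auto simp: block_diag_def)
  finally show ?thesis .
qed

lemma omega_apply_cmult: "omega_apply N (\<lambda>j. a * x j) k = a * omega_apply N x k"
  unfolding omega_apply_def by (simp add: sum_distrib_left algebra_simps)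

lemma omega_apply_block_diag_joined:
  "omega_apply (block_diag u v M N) (\<lambda>j. if j < v then real (x j) * a else b * z (j - v)) k =
    (if k < u then real_of_rat (\<Sum>j<v. M k j * of_nat (x j)) * a else b * omega_apply N z (k - u))"
proof (cases "k < u")
  case True
  then show ?thesis
    by (simp add: omega_apply_block_diag_upper of_rat_sum of_rat_mult sum_distrib_right mult.assoc)
next
  case False
  then show ?thesis
    by (simp add: omega_apply_block_diag_lower omega_apply_cmult)
qed

theorem theorem3p1:
  fixes u v :: nat and M N :: "nat \<Rightarrow> nat \<Rightarrow> rat" and S :: "real set"
  assumes "1 \<le> u" and "1 \<le> v"
    and "IPR_nat u v M"
    and "dense_subsemigroup S"
    and "row_finite N"
    and "IPR_near0_omega S N"
  shows "IPR_near0_omega S (block_diag u v M N)"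
  unfolding IPR_near0_omega_def
proof (intro allI impI, elim conjE)
  fix r C and \<delta> :: real
  assume "is_finite_partition S r C" "\<delta> > 0"
  then obtain c where c: "\<And>y. y \<in> S \<Longrightarrow> c y < r \<and> y \<in> C (c y)"
    using finite_partition_index by metis
  have add: "\<And>a b. a \<in> S \<Longrightarrow> b \<in> S \<Longrightarrow> a + b \<in> S"
    using assms(4) unfolding dense_subsemigroup_def by blast
  obtain m where m: "\<forall>f. (\<forall>n. f n < r) \<longrightarrow> (\<exists>i<r. image_in u v M {n \<in> {1..m}. f n = i})"
    using IPR_nat_uniform_bound[OF assms(3)] by blast
  obtain z where zS: "\<And>j. z j \<in> S" and imageS: "\<And>k. omega_apply N z k \<in> S"
    and small: "\<And>k n. n \<in> {1..m} \<Longrightarrow> of_nat n * omega_apply N z k \<in> S \<inter> {0<..<\<delta>}"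
    and sync: "\<And>k n. n \<in> {1..m} \<Longrightarrow> c (of_nat n * omega_apply N z k) = c (of_nat n * omega_apply N z 0)"
    using IPR_near0_omega_synchronized_multiples[OF assms(6) add, of c r \<delta> m] c \<open>\<delta> > 0\<close> by blast
  define f where "f n = c (of_nat (max 1 n) * omega_apply N z 0)" for n
  have "\<forall>n. f n < r"
    unfolding f_def using c of_nat_mult_mem_add_closed[OF add imageS] by simp
  then obtain i x where "i < r" and x: "\<forall>j<v. 1 \<le> x j"
    and entries: "\<forall>k<u. (\<Sum>j<v. M k j * of_nat (x j)) \<in> of_nat ` {n \<in> {1..m}. f n = i}"
    using m unfolding image_in_def by blast
  then obtain n0 where n0: "n0 \<in> {1..m}" "f n0 = i"
    using \<open>1 \<le> u\<close> by fastforce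
  have good: "of_nat n * omega_apply N z k \<in> C i \<inter> {0<..<\<delta>}" if "n \<in> {1..m}" "f n = i" for n k
    using small[OF that(1)] sync[OF that(1)] c[of "of_nat n * omega_apply N z k"] that
    unfolding f_def by (auto simp: max_def)
  show "\<exists>i<r. \<exists>X. (\<forall>j. X j \<in> S) \<and> (\<forall>k. omega_apply (block_diag u v M N) X k \<in> C i \<inter> {0<..<\<delta>})"
  proof (intro exI conjI allI)
    show "i < r" by fact
    show "(if j < v then real (x j) * omega_apply N z 0 else real n0 * z (j - v)) \<in> S" for j
      using of_nat_mult_mem_add_closed[OF add] imageS zS x n0 by auto
    show "omega_apply (block_diag u v M N)
        (\<lambda>j. if j < v then real (x j) * omega_apply N z 0 else real n0 * z (j - v)) k \<in> C i \<inter> {0<..<\<delta>}" for k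
      using entries good n0 by (cases "k < u") (auto simp: omega_apply_block_diag_joined)
  qed
qed

end
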